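(* Let $D$ be a delta-matroid on $[n,\overline{n}]$ and let $\square=[-1,1]^n$. The map $S\mapsto e_S$ induces a bijection between the independent sets of $D$ and the lattice points (points of $\mathbb{Z}^n$) of the polytope $\frac{1}{2}(P(D)+\square)$, where $+$ denotes Minkowski sum.
   Context: Let $[n,\overline{n}]=\{1,\dots,n,\overline{1},\dots,\overline{n}\}$ with involution $a\mapsto\overline{a}$; $\overline{S}=\{\overline{a}:a\in S\}$. A subset is admissible if it contains at most one of $i,\overline{i}$ for each $i$; $\operatorname{AdS}_n$ is the set of admissible subsets. In $\mathbb{R}^n$ set $e_{\overline{i}}=-e_i$, $e_S=\sum_{a\in S}e_a$. A delta-matroid $D$ on $[n,\overline{n}]$ is a nonempty collection $\mathcal{F}$ of admissible sets of size $n$ (feasible sets) such that $P(D)=\operatorname{Conv}\{e_B:B\in\mathcal{F}\}$ has all edges parallel to some $e_i$ or $e_i\pm e_j$. Rank function: $g_D(S)=\max_{B\in\mathcal{F}}(|S\cap B|-|\overline{S}\cap B|)$. An admissible $S$ is independent in $D$ if $g_D(S)=|S|$, equivalently if $S$ is contained in a feasible set. *)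

theory Defs
  imports "HOL-Analysis.Analysis"
begin

text \<open>The ground set [n, nbar] is modelled as the type 'n \<times> bool, where n = CARD('n):
  (i, True) stands for i and (i, False) stands for its bar.\<close>

definition bar :: "'n \<times> bool \<Rightarrow> 'n \<times> bool" where
  "bar a = (fst a, \<not> snd a)"

definition barset :: "('n \<times> bool) set \<Rightarrow> ('n \<times> bool) set" where
  "barset S = bar ` S"

definition admissible :: "('n \<times> bool) set \<Rightarrow> bool" where
  "admissible S \<longleftrightarrow> (\<forall>i. \<not> ((i, True) \<in> S \<and> (i, False) \<in> S))"

definition evec :: "'n::finite \<times> bool \<Rightarrow> real ^ 'n" where
  "evec a = (if snd a then axis (fst a) 1 else - axis (fst a) 1)"

definition eset :: "('n::finite \<times> bool) set \<Rightarrow> real ^ 'n" where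
  "eset S = (\<Sum>a\<in>S. evec a)"

definition dm_polytope :: "('n::finite \<times> bool) set set \<Rightarrow> (real ^ 'n) set" where
  "dm_polytope F = convex hull (eset ` F)"

definition edge_dirs :: "(real ^ 'n::finite) set" where
  "edge_dirs = {axis i 1 | i. True}
     \<union> {axis i 1 + axis j 1 | i j. i \<noteq> j}
     \<union> {axis i 1 - axis j 1 | i j. i \<noteq> j}"

definition is_edge :: "(real ^ 'n::finite) set \<Rightarrow> (real ^ 'n) set \<Rightarrow> bool" where
  "is_edge E P \<longleftrightarrow> E face_of P \<and> aff_dim E = 1"

definition delta_matroid :: "('n::finite \<times> bool) set set \<Rightarrow> bool" where
  "delta_matroid F \<longleftrightarrow>
     F \<noteq> {} \<and>
     (\<forall>B\<in>F. admissible B \<and> card B = CARD('n)) \<and>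
     (\<forall>E. is_edge E (dm_polytope F) \<longrightarrow>
        (\<exists>v\<in>edge_dirs. \<forall>x\<in>E. \<forall>y\<in>E. \<exists>c::real. y - x = c *\<^sub>R v))"

definition dm_rank :: "('n::finite \<times> bool) set set \<Rightarrow> ('n \<times> bool) set \<Rightarrow> int" where
  "dm_rank F S = Max ((\<lambda>B. int (card (S \<inter> B)) - int (card (barset S \<inter> B))) ` F)"

definition dm_independent :: "('n::finite \<times> bool) set set \<Rightarrow> ('n \<times> bool) set \<Rightarrow> bool" where
  "dm_independent F S \<longleftrightarrow> admissible S \<and> dm_rank F S = int (card S)"

definition minkowski_sum :: "('a::ab_group_add) set \<Rightarrow> 'a set \<Rightarrow> 'a set" where
  "minkowski_sum A B = {a + b | a b. a \<in> A \<and> b \<in> B}"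

definition unit_cube :: "(real ^ 'n::finite) set" where
  "unit_cube = {x. \<forall>i. -1 \<le> x $ i \<and> x $ i \<le> 1}"

definition lattice_points :: "(real ^ 'n::finite) set \<Rightarrow> (real ^ 'n) set" where
  "lattice_points P = {x \<in> P. \<forall>i. x $ i \<in> \<int>}"

end

theory Submission
  imports Defs
begin

text \<open>Every feasible set B is a transversal, so e_B is a vertex of the cube and P(D) lies in the
  cube. Hence a lattice point x = (p + c)/2 of the half sum has
  coordinates in {-1,0,1}, and wherever x_i is nonzero we must have p_i = c_i = x_i; thus
  x = e_S for an admissible S. For e_S with S independent, contained in B, take c = 2 e_S - e_B.
  Conversely, the linear functional y \<mapsto> \<langle>e_S, y\<rangle> is at most |S| on every vertex e_B, with
  equality exactly when S \<subseteq> B, and it equals |S| at p; so some vertex attains it.\<close>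

definition transversal :: "('n \<times> bool) set \<Rightarrow> bool" where
  "transversal B \<longleftrightarrow> (\<forall>i. (i, False) \<in> B \<longleftrightarrow> (i, True) \<notin> B)"

lemma evec_nth:
  "evec a $ i = (if a = (i, True) then 1 else 0) - (if a = (i, False) then (1::real) else 0)"
  by (cases a) (auto simp: evec_def axis_def)

lemma eset_nth:
  "eset S $ i = (if (i, True) \<in> S then 1 else 0) - (if (i, False) \<in> S then 1 else 0)"
proof -
  have "eset S $ i = (\<Sum>a\<in>S. evec a $ i)"
    unfolding eset_def by (rule sum_component)
  also have "\<dots> = (\<Sum>a\<in>S. if a = (i, True) then 1 else 0)
                  - (\<Sum>a\<in>S. if a = (i, False) then (1::real) else 0)"
    unfolding evec_nth by (rule sum_subtractf)
  finally show ?thesis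
    by simp
qed

lemma eset_nth_Ints: "eset S $ i \<in> \<int>"
  unfolding eset_nth by auto

lemma eset_nth_admissible:
  assumes "admissible S"
  shows "(i, True) \<in> S \<longleftrightarrow> eset S $ i = 1" and "(i, False) \<in> S \<longleftrightarrow> eset S $ i = -1"
  using assms unfolding admissible_def eset_nth by auto

lemma eset_nth_transversal:
  assumes "transversal B"
  shows "eset B $ i = (if (i, True) \<in> B then 1 else -1)"
  using assms unfolding transversal_def eset_nth by auto

lemma inj_on_eset: "inj_on eset {S :: ('n::finite \<times> bool) set. admissible S}"
proof (rule inj_onI, rule set_eqI)
  fix S T :: "('n \<times> bool) set" and a :: "'n \<times> bool"
  assume "S \<in> {S. admissible S}" "T \<in> {S. admissible S}" and eq: "eset S = eset T"
  then have "admissible S" "admissible T" by auto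
  then show "a \<in> S \<longleftrightarrow> a \<in> T"
    using eset_nth_admissible[of S "fst a"] eset_nth_admissible[of T "fst a"] eq
    by (cases a; cases "snd a") auto
qed

lemma transversal_if_admissible_card:
  fixes B :: "('n::finite \<times> bool) set"
  assumes "admissible B" and "card B = CARD('n)"
  shows "transversal B"
  unfolding transversal_def
proof
  fix i
  have "inj_on fst B"
    using assms(1) unfolding admissible_def inj_on_def by (metis (full_types) prod.collapse)
  then have "card (fst ` B) = CARD('n)"
    using assms(2) by (simp add: card_image)
  then have "fst ` B = UNIV"
    by (simp add: card_subset_eq)
  then obtain b where "(i, b) \<in> B"
    by (metis UNIV_I imageE prod.collapse)
  then show "(i, False) \<in> B \<longleftrightarrow> (i, True) \<notin> B"
    using assms(1) unfolding admissible_def by (cases b) auto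
qed

lemma delta_matroid_feasible_transversal:
  assumes "delta_matroid F" and "B \<in> F"
  shows "admissible B" and "transversal B"
  using assms transversal_if_admissible_card unfolding delta_matroid_def by auto

lemma dm_independent_iff_subset_feasible:
  fixes F :: "('n::finite \<times> bool) set set"
  assumes "F \<noteq> {}" and "\<forall>B\<in>F. admissible B"
  shows "dm_independent F S \<longleftrightarrow> admissible S \<and> (\<exists>B\<in>F. S \<subseteq> B)"
proof -
  define g where "g B = int (card (S \<inter> B)) - int (card (barset S \<inter> B))" for B
  have g_le: "g B \<le> int (card S)" for B
    using card_mono[OF finite Int_lower1, of S B] unfolding g_def by linarith
  have g_eq_iff: "g B = int (card S) \<longleftrightarrow> S \<subseteq> B" if "B \<in> F" for B
  proof
    assume "g B = int (card S)"
    then have "card S \<le> card (S \<inter> B)"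
      unfolding g_def by linarith
    then show "S \<subseteq> B"
      by (metis Int_lower1 card_seteq finite inf.absorb_iff1)
  next
    assume "S \<subseteq> B"
    moreover have "bar a \<notin> B" if "a \<in> S" for a
      using that \<open>S \<subseteq> B\<close> assms(2) \<open>B \<in> F\<close> unfolding admissible_def bar_def
      by (cases a; cases "snd a") auto
    then have "barset S \<inter> B = {}"
      unfolding barset_def by blast
    ultimately show "g B = int (card S)"
      unfolding g_def by (simp add: Int_absorb2)
  qed
  have rank: "dm_rank F S = Max (g ` F)"
    unfolding dm_rank_def g_def ..
  have "Max (g ` F) = int (card S) \<longleftrightarrow> (\<exists>B\<in>F. g B = int (card S))"
    using assms(1) g_le by (subst Max_eq_iff) (auto, metis image_eqI)
  then show ?thesis
    unfolding dm_independent_def rank using g_eq_iff by blast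
qed

lemma unit_cube_eq_cbox: "unit_cube = cbox (- 1) (1 :: real ^ 'n::finite)"
  unfolding unit_cube_def by (auto simp: mem_box_cart)

lemma dm_polytope_subset_unit_cube:
  assumes "\<forall>B\<in>F. transversal B"
  shows "dm_polytope F \<subseteq> unit_cube"
  unfolding dm_polytope_def
proof (rule hull_minimal)
  show "eset ` F \<subseteq> unit_cube"
    using assms eset_nth_transversal unfolding unit_cube_def by fastforce
qed (simp add: unit_cube_eq_cbox)

lemma double_eset_minus_transversal_in_unit_cube:
  assumes "admissible S" and "transversal B" and "S \<subseteq> B"
  shows "2 *\<^sub>R eset S - eset B \<in> unit_cube"
  using assms unfolding unit_cube_def admissible_def transversal_def
  by (auto simp: eset_nth)

lemma lattice_point_half_sum_in_unit_cubes:
  fixes x p c :: "real ^ 'n::finite"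
  assumes "x = (1/2::real) *\<^sub>R (p + c)" and "x $ i \<in> \<int>"
    and "p \<in> unit_cube" and "c \<in> unit_cube"
  shows "x $ i \<in> {-1, 0, 1}" and "x $ i \<noteq> 0 \<Longrightarrow> p $ i = x $ i"
proof -
  have bounds: "-1 \<le> p $ i" "p $ i \<le> 1" "-1 \<le> c $ i" "c $ i \<le> 1"
    using assms(3,4) unfolding unit_cube_def by auto
  have xi: "x $ i = (p $ i + c $ i) / 2"
    using assms(1) by simp
  obtain k where k: "x $ i = of_int k"
    using assms(2) Ints_cases by blast
  have "-1 \<le> x $ i \<and> x $ i \<le> 1"
    using xi bounds by auto
  then have "-1 \<le> k \<and> k \<le> 1"
    unfolding k by simp
  then have "k \<in> {-1, 0, 1}"
    by auto
  then show ternary: "x $ i \<in> {-1, 0, 1}"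
    using k by auto
  show "x $ i \<noteq> 0 \<Longrightarrow> p $ i = x $ i"
    using ternary xi bounds by auto
qed

lemma eset_of_ternary_vector:
  assumes "\<forall>i. x $ i \<in> {-1, 0, 1::real}"
  obtains S where "admissible S" and "eset S = x"
proof
  define S where "S = {a. x $ fst a = (if snd a then 1 else -1)}"
  show "admissible S"
    unfolding admissible_def S_def by auto
  show "eset S = x"
    using assms unfolding vec_eq_iff eset_nth S_def by auto
qed

lemma inner_eset_transversal_le:
  assumes "admissible S" and "transversal B"
  shows "inner (eset S) (eset B) \<le> inner (eset S) (eset S)"
    and "\<not> S \<subseteq> B \<Longrightarrow> inner (eset S) (eset B) < inner (eset S) (eset S)"
proof -
  have S_nth: "eset S $ j \<in> {-1, 0, 1}" for j
    using assms(1) unfolding admissible_def eset_nth by auto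
  have B_nth: "eset B $ j \<in> {-1, 1}" for j
    using eset_nth_transversal[OF assms(2)] by simp
  have term_le: "eset S $ j * eset B $ j \<le> eset S $ j * eset S $ j" for j
    using S_nth[of j] B_nth[of j] by auto
  then show "inner (eset S) (eset B) \<le> inner (eset S) (eset S)"
    unfolding inner_vec_def inner_real_def by (intro sum_mono)
  assume "\<not> S \<subseteq> B"
  then obtain i b where "(i, b) \<in> S" "(i, b) \<notin> B"
    by auto
  then have "eset S $ i = (if b then 1 else -1)" "eset B $ i = (if b then -1 else 1)"
    using eset_nth_admissible[OF assms(1), of i] eset_nth_transversal[OF assms(2), of i] assms(2)
    unfolding transversal_def by (cases b; simp)+
  then have "eset S $ i * eset B $ i < eset S $ i * eset S $ i"
    by simp
  then show "inner (eset S) (eset B) < inner (eset S) (eset S)"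
    unfolding inner_vec_def inner_real_def using term_le by (intro sum_strict_mono_ex1) auto
qed

lemma subset_feasible_if_polytope_point_extends:
  assumes "\<forall>B\<in>F. transversal B" and "admissible S" and "p \<in> dm_polytope F"
    and agree: "\<And>i. eset S $ i \<noteq> 0 \<Longrightarrow> p $ i = eset S $ i"
  shows "\<exists>B\<in>F. S \<subseteq> B"
proof (rule ccontr)
  let ?x = "eset S"
  assume "\<not> (\<exists>B\<in>F. S \<subseteq> B)"
  then have "eset ` F \<subseteq> {y. inner ?x y < inner ?x ?x}"
    using assms(1,2) inner_eset_transversal_le(2) by blast
  then have "p \<in> {y. inner ?x y < inner ?x ?x}"
    using assms(3) hull_minimal[where S = convex, OF _ convex_halfspace_lt] unfolding dm_polytope_def by blast
  moreover have "inner ?x p = inner ?x ?x"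
    unfolding inner_vec_def inner_real_def
  proof (rule sum.cong)
    show "?x $ i * p $ i = ?x $ i * ?x $ i" for i
      using agree[of i] by (cases "?x $ i = 0") auto
  qed simp
  ultimately show False
    by simp
qed

lemma eset_subset_feasible_in_lattice_points:
  assumes "\<forall>B\<in>F. transversal B" and "admissible S" and "B \<in> F" and "S \<subseteq> B"
  shows "eset S \<in> lattice_points ((\<lambda>x. (1/2::real) *\<^sub>R x) ` minkowski_sum (dm_polytope F) unit_cube)"
proof -
  have "eset B \<in> dm_polytope F"
    unfolding dm_polytope_def using assms(3) by (simp add: hull_inc)
  moreover have "2 *\<^sub>R eset S - eset B \<in> unit_cube"
    using double_eset_minus_transversal_in_unit_cube assms by blast
  moreover have "eset S = (1/2::real) *\<^sub>R (eset B + (2 *\<^sub>R eset S - eset B))"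
    by simp
  ultimately have "eset S \<in> (\<lambda>x. (1/2::real) *\<^sub>R x) ` minkowski_sum (dm_polytope F) unit_cube"
    unfolding minkowski_sum_def by blast
  then show ?thesis
    unfolding lattice_points_def using eset_nth_Ints by blast
qed

lemma lattice_points_eset_subset_feasible:
  assumes "\<forall>B\<in>F. transversal B"
    and "x \<in> lattice_points ((\<lambda>x. (1/2::real) *\<^sub>R x) ` minkowski_sum (dm_polytope F) unit_cube)"
  obtains S B where "admissible S" and "B \<in> F" and "S \<subseteq> B" and "eset S = x"
proof -
  have int: "\<forall>i. x $ i \<in> \<int>"
    and "x \<in> (\<lambda>x. (1/2::real) *\<^sub>R x) ` minkowski_sum (dm_polytope F) unit_cube"
    using assms(2) unfolding lattice_points_def by auto
  then obtain p c where x: "x = (1/2::real) *\<^sub>R (p + c)"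
      and p: "p \<in> dm_polytope F" and c: "c \<in> unit_cube"
    unfolding minkowski_sum_def by blast
  have p_cube: "p \<in> unit_cube"
    using p dm_polytope_subset_unit_cube[OF assms(1)] by blast
  note coords = lattice_point_half_sum_in_unit_cubes[OF x int[rule_format] p_cube c]
  obtain S where S: "admissible S" "eset S = x"
    using eset_of_ternary_vector[of x] coords(1) by blast
  have "\<exists>B\<in>F. S \<subseteq> B"
    by (rule subset_feasible_if_polytope_point_extends[OF assms(1) S(1) p])
      (use coords(2) S(2) in auto)
  then show ?thesis
    using S that by blast
qed

theorem proposition3p6:
  fixes F :: "('n::finite \<times> bool) set set"
  assumes "delta_matroid F"
  shows "bij_betw eset {S. dm_independent F S}
           (lattice_points ((\<lambda>x. (1/2::real) *\<^sub>R x) ` minkowski_sum (dm_polytope F) unit_cube))"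
proof -
  have trans: "\<forall>B\<in>F. transversal B" and adm: "\<forall>B\<in>F. admissible B"
    using delta_matroid_feasible_transversal[OF assms] by auto
  have "F \<noteq> {}"
    using assms unfolding delta_matroid_def by blast
  then have indep: "dm_independent F S \<longleftrightarrow> admissible S \<and> (\<exists>B\<in>F. S \<subseteq> B)" for S
    using adm by (rule dm_independent_iff_subset_feasible)
  have "inj_on eset {S. dm_independent F S}"
    using inj_on_eset by (rule inj_on_subset) (auto simp: indep)
  moreover have "eset ` {S. dm_independent F S} \<subseteq> lattice_points
      ((\<lambda>x. (1/2::real) *\<^sub>R x) ` minkowski_sum (dm_polytope F) unit_cube)"
    using eset_subset_feasible_in_lattice_points[OF trans] by (auto simp: indep)
  moreover have "lattice_points ((\<lambda>x. (1/2::real) *\<^sub>R x) ` minkowski_sum (dm_polytope F) unit_cube)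
      \<subseteq> eset ` {S. dm_independent F S}"
    by (auto simp: indep elim!: lattice_points_eset_subset_feasible[OF trans])
  ultimately show ?thesis
    unfolding bij_betw_def by blast
qed

end
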